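(* Fix an integer $d\geq 2$ and $\theta\in\mathbb{R}$, and let $w=\frac{e^{id\theta}-de^{i\theta}}{d+1}$ with $|w|<1$. Let $z_0$ be the Denjoy–Wolff point of $B_w(z)=\left(\frac{z-w}{1-\overline{w}z}\right)^d$. Then $z_0=e^{id\theta}$.
   Context: $\mathbb{D}$ denotes the open unit disk. By the Denjoy–Wolff theorem, a finite Blaschke product $B$ of degree at least $2$ has a unique point $z_0\in\overline{\mathbb{D}}$, its Denjoy–Wolff point, such that $B^n(z)\to z_0$ for every $z\in\mathbb{D}$. *)

theory Defs
  imports "HOL-Analysis.Analysis"
begin

definition blaschke_pow :: "complex \<Rightarrow> nat \<Rightarrow> complex \<Rightarrow> complex" where
  "blaschke_pow w d z = ((z - w) / (1 - cnj w * z)) ^ d"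

definition denjoy_wolff_point :: "(complex \<Rightarrow> complex) \<Rightarrow> complex" where
  "denjoy_wolff_point B =
     (THE z0. z0 \<in> cball 0 1 \<and> (\<forall>z\<in>ball 0 1. (\<lambda>n. (B ^^ n) z) \<longlonglongrightarrow> z0))"

end

theory Submission
  imports Defs
begin

text \<open>Put \<zeta> = exp(i\<theta>) and \<eta> = \<zeta>^d, so that B_w is the d-th power of the disk automorphism
  \<phi>(z) = (z - w)/(1 - conj(w) z), and measure the position of z relative to the boundary point \<eta> by
  the Julia quotient Q_\<eta>(z) = (1 - |z|^2)/|\<eta> - z|^2. For this particular w, \<phi> maps \<eta> to \<zeta> and
  multiplies Julia quotients by exactly d, while Lagrange's identity gives
  Q_\<eta>(u^d) \<ge> Q_\<zeta>(u)/d + (1 - |u|^2)/d^3 for the power map. Hence Q_\<eta> increases along every orbit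
  by at least a fixed multiple of 1 - |z_n|^2 = |\<eta> - z_n|^2 Q_\<eta>(z_n): either Q_\<eta>(z_n) stays bounded
  and its increments vanish, or it diverges; in both cases |\<eta> - z_n| \<rightarrow> 0.\<close>

lemma sum_sum_norm_diff_square:
  fixes a :: "'i \<Rightarrow> 'a :: real_inner"
  shows "(\<Sum>i\<in>I. \<Sum>j\<in>I. (norm (a i - a j))\<^sup>2)
    = 2 * real (card I) * (\<Sum>i\<in>I. (norm (a i))\<^sup>2) - 2 * (norm (\<Sum>i\<in>I. a i))\<^sup>2"
proof -
  have "(\<Sum>i\<in>I. \<Sum>j\<in>I. (norm (a i - a j))\<^sup>2)
      = (\<Sum>i\<in>I. \<Sum>j\<in>I. (norm (a i))\<^sup>2 + (norm (a j))\<^sup>2 - 2 * inner (a i) (a j))"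
    by (simp add: power2_norm_eq_inner inner_diff_left inner_diff_right inner_commute)
  also have "\<dots> = 2 * real (card I) * (\<Sum>i\<in>I. (norm (a i))\<^sup>2) - 2 * (\<Sum>i\<in>I. \<Sum>j\<in>I. inner (a i) (a j))"
    by (simp add: sum.distrib sum_subtractf sum_distrib_left sum_distrib_right mult.assoc)
  also have "(\<Sum>i\<in>I. \<Sum>j\<in>I. inner (a i) (a j)) = (norm (\<Sum>i\<in>I. a i))\<^sup>2"
    by (simp add: power2_norm_eq_inner inner_sum_left inner_sum_right) (rule sum.swap)
  finally show ?thesis .
qed

lemma norm_diff_square_le_card_sum:
  fixes a :: "'i \<Rightarrow> 'a :: real_inner"
  assumes "finite I" "i \<in> I" "j \<in> I" "i \<noteq> j"
  shows "(norm (a i - a j))\<^sup>2 \<le> real (card I) * (\<Sum>k\<in>I. (norm (a k))\<^sup>2) - (norm (\<Sum>k\<in>I. a k))\<^sup>2"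
proof -
  have "(\<Sum>k\<in>{i,j}. (norm (a k - a (if k = i then j else i)))\<^sup>2)
      \<le> (\<Sum>k\<in>{i,j}. \<Sum>l\<in>I. (norm (a k - a l))\<^sup>2)"
    using assms by (intro sum_mono member_le_sum) auto
  also have "\<dots> \<le> (\<Sum>k\<in>I. \<Sum>l\<in>I. (norm (a k - a l))\<^sup>2)"
    using assms by (intro sum_mono2) (auto intro: sum_nonneg)
  finally show ?thesis
    using assms by (simp add: sum_sum_norm_diff_square norm_minus_commute)
qed

definition moebius :: "complex \<Rightarrow> complex \<Rightarrow> complex" where
  "moebius w z = (z - w) / (1 - cnj w * z)"

lemma blaschke_pow_eq_moebius_power: "blaschke_pow w d z = moebius w z ^ d"
  by (simp add: blaschke_pow_def moebius_def)

text \<open>Up to a constant, the Poisson kernel of the disk at \<eta>; its superlevel sets are the horodisks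
  at \<eta>.\<close>
definition julia_quotient :: "complex \<Rightarrow> complex \<Rightarrow> real" where
  "julia_quotient \<eta> z = (1 - (norm z)\<^sup>2) / (norm (\<eta> - z))\<^sup>2"

lemma julia_quotient_pos:
  assumes "norm \<eta> = 1" "norm z < 1"
  shows "julia_quotient \<eta> z > 0"
proof -
  have "\<eta> \<noteq> z" using assms by auto
  with assms show ?thesis by (simp add: julia_quotient_def abs_square_less_1)
qed

lemma moebius_denom_nonzero:
  assumes "norm w < 1" "norm z \<le> 1"
  shows "1 - cnj w * z \<noteq> 0"
proof
  assume "1 - cnj w * z = 0"
  then have "norm (cnj w * z) = 1" by (simp add: right_minus_eq)
  moreover have "norm (cnj w * z) \<le> norm w"
    using assms(2) by (simp add: norm_mult mult_left_le)
  ultimately show False using assms(1) by simp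
qed

lemma one_minus_norm_moebius_square:
  assumes "norm w < 1" "norm z \<le> 1"
  shows "1 - (norm (moebius w z))\<^sup>2 = (1 - (norm w)\<^sup>2) * (1 - (norm z)\<^sup>2) / (norm (1 - cnj w * z))\<^sup>2"
proof -
  have D: "1 - cnj w * z \<noteq> 0" using moebius_denom_nonzero[OF assms] .
  have "complex_of_real ((norm (1 - cnj w * z))\<^sup>2 - (norm (z - w))\<^sup>2)
      = complex_of_real ((1 - (norm w)\<^sup>2) * (1 - (norm z)\<^sup>2))"
    by (simp only: of_real_diff of_real_mult of_real_1 complex_norm_square) (simp add: algebra_simps)
  then have "(norm (1 - cnj w * z))\<^sup>2 - (norm (z - w))\<^sup>2 = (1 - (norm w)\<^sup>2) * (1 - (norm z)\<^sup>2)"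
    using of_real_eq_iff by blast
  with D show ?thesis
    by (simp add: moebius_def norm_divide power_divide field_simps)
qed

lemma one_minus_norm_moebius_square_ge:
  assumes "norm w < 1" "norm z \<le> 1"
  shows "(1 - (norm w)\<^sup>2) * (1 - (norm z)\<^sup>2) / 4 \<le> 1 - (norm (moebius w z))\<^sup>2"
proof -
  have "norm (1 - cnj w * z) \<le> 1 + norm w * norm z"
    using norm_triangle_ineq4[of 1 "cnj w * z"] by (simp add: norm_mult)
  also have "\<dots> \<le> 2"
    using assms mult_le_one[of "norm w" "norm z"] by simp
  finally have "(norm (1 - cnj w * z))\<^sup>2 \<le> 4"
    using power_mono[of _ 2 2] by fastforce
  moreover have "(1 - (norm w)\<^sup>2) * (1 - (norm z)\<^sup>2) \<ge> 0"
    using assms by (simp add: abs_square_le_1 less_imp_le)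
  moreover have "(norm (1 - cnj w * z))\<^sup>2 > 0"
    using moebius_denom_nonzero[OF assms] by simp
  ultimately show ?thesis
    unfolding one_minus_norm_moebius_square[OF assms] by (intro divide_left_mono) auto
qed

lemma norm_moebius_less_1:
  assumes "norm w < 1" "norm z < 1"
  shows "norm (moebius w z) < 1"
proof -
  have "1 - (norm (moebius w z))\<^sup>2 > 0"
    using assms moebius_denom_nonzero[of w z]
    by (simp add: one_minus_norm_moebius_square abs_square_less_1)
  then show ?thesis by (simp add: abs_square_less_1)
qed

lemma norm_blaschke_pow_less_1:
  assumes "norm w < 1" "norm z < 1" "d > 0"
  shows "norm (blaschke_pow w d z) < 1"
  using norm_moebius_less_1[OF assms(1,2)] assms(3)
  by (simp add: blaschke_pow_eq_moebius_power norm_power power_less_one_iff)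

lemma moebius_diff:
  assumes "norm w < 1" "norm a \<le> 1" "norm b \<le> 1"
  shows "moebius w a - moebius w b
    = (1 - w * cnj w) * (a - b) / ((1 - cnj w * a) * (1 - cnj w * b))"
  using moebius_denom_nonzero[OF assms(1,2)] moebius_denom_nonzero[OF assms(1,3)]
  by (simp add: moebius_def field_simps)

lemma julia_quotient_moebius:
  assumes "norm w < 1" "norm \<eta> \<le> 1" "norm z \<le> 1"
  shows "julia_quotient (moebius w \<eta>) (moebius w z)
    = (norm (1 - cnj w * \<eta>))\<^sup>2 / (1 - (norm w)\<^sup>2) * julia_quotient \<eta> z"
proof -
  define a where "a = 1 - (norm w)\<^sup>2"
  define N where "N = (norm (1 - cnj w * \<eta>))\<^sup>2"
  define M where "M = (norm (1 - cnj w * z))\<^sup>2"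
  have a: "a > 0" using assms(1) by (simp add: a_def abs_square_less_1)
  have "1 - w * cnj w = complex_of_real a"
    using complex_norm_square[of w] by (simp add: a_def)
  then have "(norm (moebius w \<eta> - moebius w z))\<^sup>2 = a\<^sup>2 * (norm (\<eta> - z))\<^sup>2 / (N * M)"
    using a by (simp add: moebius_diff[OF assms] N_def M_def norm_mult norm_divide power_mult_distrib power_divide)
  moreover have "1 - (norm (moebius w z))\<^sup>2 = a * (1 - (norm z)\<^sup>2) / M"
    unfolding a_def M_def by (rule one_minus_norm_moebius_square[OF assms(1,3)])
  moreover have "N > 0" "M > 0"
    using moebius_denom_nonzero[OF assms(1,2)] moebius_denom_nonzero[OF assms(1,3)] by (simp_all add: N_def M_def)
  ultimately show ?thesis
    using a unfolding julia_quotient_def a_def[symmetric] N_def[symmetric]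
    by (simp add: power2_eq_square)
qed

lemma julia_quotient_power_ge:
  fixes \<zeta> u :: complex and d :: nat
  assumes d: "d \<ge> 2" and \<zeta>: "norm \<zeta> = 1" and u: "norm u < 1"
  shows "julia_quotient (\<zeta> ^ d) (u ^ d) \<ge> julia_quotient \<zeta> u / d + (1 - (norm u)\<^sup>2) / d ^ 3"
proof -
  \<comment> \<open>\<zeta>^d - u^d = (\<zeta> - u) P with P = \<Sum> a i; the two top terms of P differ by \<zeta>^(d-2) (\<zeta> - u),
    so Lagrange's inequality gives d S \<ge> |\<zeta> - u|^2 + |P|^2.\<close>
  define a where "a i = u ^ (d - Suc i) * \<zeta> ^ i" for i
  define P where "P = (\<Sum>i<d. a i)"
  define S where "S = (\<Sum>i<d. (norm (a i))\<^sup>2)"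
  define A where "A = 1 - (norm u)\<^sup>2"
  define Z where "Z = (norm (\<zeta> - u))\<^sup>2"
  have A: "A > 0" using u by (simp add: A_def abs_square_less_1)
  have Z: "Z > 0" using \<zeta> u by (auto simp: Z_def)
  have factor: "\<zeta> ^ d - u ^ d = (\<zeta> - u) * P"
    unfolding P_def a_def by (rule power_diff_sumr2)
  have norm_a: "(norm (a i))\<^sup>2 = ((norm u)\<^sup>2) ^ (d - Suc i)" for i
    using \<zeta> by (simp add: a_def norm_mult norm_power power_mult[symmetric] mult.commute)
  have "(1::real) ^ d - ((norm u)\<^sup>2) ^ d = (1 - (norm u)\<^sup>2) * (\<Sum>i<d. ((norm u)\<^sup>2) ^ (d - Suc i) * 1 ^ i)"
    by (rule power_diff_sumr2)
  then have one_minus: "1 - (norm (u ^ d))\<^sup>2 = A * S"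
    by (simp add: A_def S_def norm_a norm_power power_mult[symmetric] mult.commute)
  have "a (d - 1) - a (d - 2) = \<zeta> ^ (d - 2) * (\<zeta> - u)"
  proof -
    obtain m where m: "d = Suc (Suc m)" using d by (metis add_2_eq_Suc le_Suc_ex)
    show ?thesis by (simp add: a_def m algebra_simps)
  qed
  then have lagrange: "Z \<le> d * S - (norm P)\<^sup>2"
    using norm_diff_square_le_card_sum[of "{..<d}" "d - 1" "d - 2" a] d \<zeta>
    by (simp add: Z_def S_def P_def norm_mult norm_power)
  have "norm P \<le> (\<Sum>i<d. norm (a i))" unfolding P_def by (rule norm_sum)
  also have "\<dots> \<le> d"
    using sum_mono[of "{..<d}" "\<lambda>i. norm (a i)" "\<lambda>_. 1"] \<zeta> u
    by (simp add: a_def norm_mult norm_power power_le_one less_imp_le)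
  finally have P_le: "(norm P)\<^sup>2 \<le> d\<^sup>2" by (simp add: power_mono)
  have "norm (u ^ d) < 1" using u d by (simp add: norm_power power_less_one_iff)
  then have "\<zeta> ^ d \<noteq> u ^ d" using \<zeta> by (metis norm_power power_one less_irrefl)
  then have "P \<noteq> 0" using factor by auto
  then have P: "(norm P)\<^sup>2 > 0" by simp
  have "real d * (norm P)\<^sup>2 \<le> real d ^ 3"
    using mult_left_mono[OF P_le, of "real d"] by (simp add: power3_eq_cube power2_eq_square)
  then have "A / real d ^ 3 \<le> A / (d * (norm P)\<^sup>2)"
    using A P d by (intro divide_left_mono) auto
  moreover have "julia_quotient \<zeta> u / d = A / (d * Z)"
    by (simp add: julia_quotient_def A_def Z_def)
  ultimately have "julia_quotient \<zeta> u / d + A / d ^ 3 \<le> A / (d * Z) + A / (d * (norm P)\<^sup>2)"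
    by simp
  also have "\<dots> = A * (Z + (norm P)\<^sup>2) / (d * Z * (norm P)\<^sup>2)"
    using Z P d by (simp add: field_simps)
  also have "\<dots> \<le> A * (d * S) / (d * Z * (norm P)\<^sup>2)"
    using A Z P d lagrange by (intro divide_right_mono mult_left_mono) auto
  also have "\<dots> = julia_quotient (\<zeta> ^ d) (u ^ d)"
    using d by (simp add: julia_quotient_def one_minus factor Z_def norm_mult power_mult_distrib)
  finally show ?thesis by (simp add: A_def)
qed

text \<open>Thus \<zeta>^d is a boundary fixed point of B_w with angular derivative 1: the factor d by which
  the Moebius factor multiplies Julia quotients is exactly lost again by the power map.\<close>
lemma parabolic_parameter:
  fixes \<zeta> w :: complex and d :: nat
  assumes \<zeta>: "norm \<zeta> = 1" and w_def: "w = (\<zeta> ^ d - of_nat d * \<zeta>) / (of_nat d + 1)" and w: "norm w < 1"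
  shows "moebius w (\<zeta> ^ d) = \<zeta>"
    and "(norm (1 - cnj w * \<zeta> ^ d))\<^sup>2 = real d * (1 - (norm w)\<^sup>2)"
proof -
  define \<eta> where "\<eta> = \<zeta> ^ d"
  have "\<zeta> * cnj \<zeta> = 1"
    using \<zeta> by (simp add: complex_norm_square[symmetric])
  then have unit: "\<zeta> * cnj \<zeta> = 1" "\<eta> * cnj \<eta> = 1"
    by (simp_all add: \<eta>_def flip: power_mult_distrib)
  have dp: "(of_nat d + 1 :: complex) \<noteq> 0" "(1 + of_nat d :: complex) \<noteq> 0"
    using of_nat_neq_0[of d, where 'a=complex] by (simp_all add: add.commute)
  have w': "(of_nat d + 1) * w = \<eta> - of_nat d * \<zeta>" "(of_nat d + 1) * cnj w = cnj \<eta> - of_nat d * cnj \<zeta>"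
    using dp by (simp_all add: w_def \<eta>_def)
  have num: "(of_nat d + 1) * (\<eta> - w) = of_nat d * (\<eta> + \<zeta>)"
    using w' by algebra
  have den: "(of_nat d + 1) * (1 - cnj w * \<eta>) = of_nat d * cnj \<zeta> * (\<eta> + \<zeta>)"
    using w' unit by algebra
  have "(of_nat d + 1) * (\<eta> - w) = (of_nat d + 1) * (\<zeta> * (1 - cnj w * \<eta>))"
    using num den unit by algebra
  then have "\<eta> - w = \<zeta> * (1 - cnj w * \<eta>)"
    using dp by simp
  moreover have "1 - cnj w * \<eta> \<noteq> 0"
    using moebius_denom_nonzero[OF w] \<zeta> by (simp add: \<eta>_def norm_power)
  ultimately have "(\<eta> - w) / (1 - cnj w * \<eta>) = \<zeta>"
    by simp
  then show "moebius w (\<zeta> ^ d) = \<zeta>" by (simp add: moebius_def \<eta>_def)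
  have "(of_nat d + 1)\<^sup>2 * ((1 - cnj w * \<eta>) * (1 - w * cnj \<eta>)) = (of_nat d + 1)\<^sup>2 * (of_nat d * (1 - w * cnj w))"
    using w' unit by algebra
  then have "complex_of_real ((norm (1 - cnj w * \<eta>))\<^sup>2) = complex_of_real (real d * (1 - (norm w)\<^sup>2))"
    using dp complex_norm_square[of "1 - cnj w * \<eta>"] complex_norm_square[of w] by simp
  then show "(norm (1 - cnj w * \<zeta> ^ d))\<^sup>2 = real d * (1 - (norm w)\<^sup>2)"
    unfolding \<eta>_def of_real_eq_iff .
qed

lemma julia_quotient_blaschke_pow_ge:
  fixes \<zeta> w z :: complex and d :: nat
  assumes d: "d \<ge> 2" and \<zeta>: "norm \<zeta> = 1"
    and w_def: "w = (\<zeta> ^ d - of_nat d * \<zeta>) / (of_nat d + 1)" and w: "norm w < 1"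
    and z: "norm z < 1"
  shows "julia_quotient (\<zeta> ^ d) (blaschke_pow w d z)
    \<ge> julia_quotient (\<zeta> ^ d) z + (1 - (norm w)\<^sup>2) / (4 * d ^ 3) * (1 - (norm z)\<^sup>2)"
proof -
  define u where "u = moebius w z"
  have u: "norm u < 1" using norm_moebius_less_1[OF w z] by (simp add: u_def)
  have "1 - (norm w)\<^sup>2 > 0" using w by (simp add: abs_square_less_1)
  then have "julia_quotient \<zeta> u = d * julia_quotient (\<zeta> ^ d) z"
    using julia_quotient_moebius[OF w _ less_imp_le[OF z], of "\<zeta> ^ d"] \<zeta>
    by (simp add: u_def parabolic_parameter[OF \<zeta> w_def w] norm_power)
  then have "julia_quotient (\<zeta> ^ d) z + (1 - (norm u)\<^sup>2) / d ^ 3 \<le> julia_quotient (\<zeta> ^ d) (u ^ d)"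
    using julia_quotient_power_ge[OF d \<zeta> u] d by simp
  moreover have "(1 - (norm w)\<^sup>2) * (1 - (norm z)\<^sup>2) / 4 / d ^ 3 \<le> (1 - (norm u)\<^sup>2) / d ^ 3"
    using one_minus_norm_moebius_square_ge[OF w less_imp_le[OF z]]
    unfolding u_def by (rule divide_right_mono) simp
  moreover have "(1 - (norm w)\<^sup>2) / (4 * d ^ 3) * (1 - (norm z)\<^sup>2)
      = (1 - (norm w)\<^sup>2) * (1 - (norm z)\<^sup>2) / 4 / d ^ 3"
    by simp
  ultimately show ?thesis
    unfolding blaschke_pow_eq_moebius_power u_def[symmetric] by linarith
qed

lemma tendsto_0_if_le_inverse_and_increments:
  fixes Q e :: "nat \<Rightarrow> real" and K :: real
  assumes K: "K > 0" and Q: "incseq Q"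
    and e0: "\<And>n. 0 \<le> e n" and e_inverse: "\<And>n. e n \<le> 1 / Q n"
    and e_increment: "\<And>n. e n \<le> (Q (Suc n) - Q n) / K"
  shows "e \<longlonglongrightarrow> 0"
proof (cases "\<exists>M. \<forall>n. Q n \<le> M")
  case True
  then obtain L where "Q \<longlonglongrightarrow> L"
    using incseq_convergent[OF Q] by blast
  then have "(\<lambda>n. (Q (Suc n) - Q n) / K) \<longlonglongrightarrow> (L - L) / K"
    using K by (intro tendsto_intros LIMSEQ_Suc[of Q L]) auto
  then have increments: "(\<lambda>n. (Q (Suc n) - Q n) / K) \<longlonglongrightarrow> 0" by simp
  show ?thesis
    by (rule real_tendsto_sandwich[OF _ _ tendsto_const increments])
      (auto intro!: always_eventually intro: e0 e_increment)
next
  case False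
  have "filterlim Q at_top sequentially"
    unfolding filterlim_at_top eventually_sequentially
  proof
    fix M
    from False obtain N where "M < Q N" by (meson not_le)
    then show "\<exists>N. \<forall>n\<ge>N. M \<le> Q n"
      using Q by (meson incseqD less_imp_le order_trans)
  qed
  then have inverse: "(\<lambda>n. inverse (Q n)) \<longlonglongrightarrow> 0" by (rule tendsto_inverse_0_at_top)
  show ?thesis
    by (rule real_tendsto_sandwich[OF _ _ tendsto_const inverse])
      (auto intro!: always_eventually intro: e0 simp: e_inverse[unfolded inverse_eq_divide[symmetric]])
qed

lemma iterates_tendsto_of_julia_quotient_increase:
  fixes B :: "complex \<Rightarrow> complex" and \<eta> z :: complex and c :: real
  assumes \<eta>: "norm \<eta> = 1" and c: "c > 0"
    and B_ball: "\<And>x. norm x < 1 \<Longrightarrow> norm (B x) < 1"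
    and B_julia: "\<And>x. norm x < 1 \<Longrightarrow> julia_quotient \<eta> (B x) \<ge> julia_quotient \<eta> x + c * (1 - (norm x)\<^sup>2)"
    and z: "norm z < 1"
  shows "(\<lambda>n. (B ^^ n) z) \<longlonglongrightarrow> \<eta>"
proof -
  define q where "q n = julia_quotient \<eta> ((B ^^ n) z)" for n
  define e where "e n = (norm (\<eta> - (B ^^ n) z))\<^sup>2" for n
  have ball: "norm ((B ^^ n) z) < 1" for n
    by (induction n) (simp_all add: z B_ball)
  have q_pos: "q n > 0" for n
    using julia_quotient_pos[OF \<eta> ball] by (simp add: q_def)
  have step: "q (Suc n) \<ge> q n + c * (1 - (norm ((B ^^ n) z))\<^sup>2)" for n
    using B_julia[OF ball[of n]] by (simp add: q_def)
  have q_inc: "incseq q"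
  proof (rule incseq_SucI)
    fix n
    have "0 \<le> c * (1 - (norm ((B ^^ n) z))\<^sup>2)"
      using c ball[of n] by (simp add: abs_square_le_1 less_imp_le)
    with step[of n] show "q n \<le> q (Suc n)" by linarith
  qed
  have eq: "e n * q n = 1 - (norm ((B ^^ n) z))\<^sup>2" for n
  proof -
    have "\<eta> \<noteq> (B ^^ n) z" using \<eta> ball[of n] by auto
    then show ?thesis by (simp add: e_def q_def julia_quotient_def)
  qed
  have e0: "0 \<le> e n" for n by (simp add: e_def)
  have "e \<longlonglongrightarrow> 0"
  proof (rule tendsto_0_if_le_inverse_and_increments[OF _ q_inc e0])
    show "c * q 0 > 0" using c q_pos by simp
    show "e n \<le> 1 / q n" for n
    proof -
      have "e n * q n \<le> 1" unfolding eq by simp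
      with q_pos[of n] show ?thesis by (simp add: field_simps)
    qed
    show "e n \<le> (q (Suc n) - q n) / (c * q 0)" for n
    proof -
      have "c * (e n * q 0) \<le> c * (e n * q n)"
        using c e0 q_inc by (simp add: incseq_def mult_left_mono)
      also have "\<dots> \<le> q (Suc n) - q n"
        using step[of n] by (simp add: eq)
      finally show ?thesis
        using c q_pos[of 0] by (simp add: field_simps)
    qed
  qed
  then have "(\<lambda>n. norm ((B ^^ n) z - \<eta>)) \<longlonglongrightarrow> 0"
    using tendsto_real_sqrt[of e 0] by (simp add: e_def norm_minus_commute)
  then show ?thesis
    by (simp add: tendsto_norm_zero_iff LIM_zero_iff)
qed

lemma denjoy_wolff_pointI:
  assumes "z0 \<in> cball 0 1" "\<And>z. z \<in> ball 0 1 \<Longrightarrow> (\<lambda>n. (B ^^ n) z) \<longlonglongrightarrow> z0"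
  shows "denjoy_wolff_point B = z0"
  unfolding denjoy_wolff_point_def
proof (rule the_equality)
  fix y assume "y \<in> cball 0 1 \<and> (\<forall>z\<in>ball 0 1. (\<lambda>n. (B ^^ n) z) \<longlonglongrightarrow> y)"
  then have "(\<lambda>n. (B ^^ n) 0) \<longlonglongrightarrow> y" by simp
  with assms(2)[of 0] show "y = z0" by (simp add: LIMSEQ_unique)
qed (use assms in auto)

theorem corollary2p2:
  fixes d :: nat and \<theta> :: real and w :: complex
  assumes "d \<ge> 2"
    and "w = (exp (\<i> * of_nat d * of_real \<theta>) - of_nat d * exp (\<i> * of_real \<theta>)) / (of_nat d + 1)"
    and "norm w < 1"
  shows "denjoy_wolff_point (blaschke_pow w d) = exp (\<i> * of_nat d * of_real \<theta>)"
proof -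
  define \<zeta> where "\<zeta> = exp (\<i> * of_real \<theta>)"
  have \<zeta>: "norm \<zeta> = 1" by (simp add: \<zeta>_def)
  have \<eta>: "exp (\<i> * of_nat d * of_real \<theta>) = \<zeta> ^ d"
    by (simp add: \<zeta>_def mult.commute mult.left_commute flip: exp_of_nat_mult)
  have w_def: "w = (\<zeta> ^ d - of_nat d * \<zeta>) / (of_nat d + 1)"
    using assms(2) by (simp add: \<eta> \<zeta>_def)
  have "(\<lambda>n. (blaschke_pow w d ^^ n) z) \<longlonglongrightarrow> \<zeta> ^ d" if "norm z < 1" for z
  proof (rule iterates_tendsto_of_julia_quotient_increase)
    show "norm (\<zeta> ^ d) = 1" by (simp add: \<zeta> norm_power)
    show "(1 - (norm w)\<^sup>2) / (4 * d ^ 3) > 0"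
      using assms(1,3) by (simp add: abs_square_less_1)
    show "norm (blaschke_pow w d x) < 1" if "norm x < 1" for x
      using norm_blaschke_pow_less_1[OF assms(3) that] assms(1) by simp
    show "julia_quotient (\<zeta> ^ d) (blaschke_pow w d x)
        \<ge> julia_quotient (\<zeta> ^ d) x + (1 - (norm w)\<^sup>2) / (4 * d ^ 3) * (1 - (norm x)\<^sup>2)"
      if "norm x < 1" for x
      by (rule julia_quotient_blaschke_pow_ge[OF assms(1) \<zeta> w_def assms(3) that])
  qed (rule that)
  then show ?thesis
    by (intro denjoy_wolff_pointI) (auto simp: \<eta> \<zeta> norm_power)
qed

end
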